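(* Assume $J(x,y)=\mathcal{K}(x-y)$ with $\mathcal{K}$ even, satisfying (H0), (H0'), (H1), (H2). Let $E\subset\mathbb{R}^N$ be a bounded open set whose boundary has modulus of continuity $\varpi_0$, i.e. $\partial E$ is covered by finitely many open sets in each of which, after a rigid motion, $E$ coincides with the subgraph $\{(x',x_N): x_N<\eta(x')\}$ of a function $\eta$ defined on a ball of $\mathbb{R}^{N-1}$ with $|\eta(z_1)-\eta(z_2)|\le\varpi_0(|z_1-z_2|)$, where $\varpi_0:[0,\infty)\to[0,\infty)$ is continuous, increasing, $\varpi_0(0)=0$. If $$\int_0^\rho\frac{\varpi_0(s)\ell(s)}{s}\,ds<\infty,$$ then the $J$-perimeter $P_J(E)=\int_E\int_{E^c}\mathcal{K}(x-y)\,dy\,dx=\int_E\mathfrak{L}\mathds{1}_E(x)\,dx$ is finite.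
   Context: $N\ge1$, $B_\varepsilon=\{|z|<\varepsilon\}$. (H0): $J:\mathbb{R}^N\times\mathbb{R}^N\to[0,\infty)$ measurable, symmetric, $\sup_x\int\min(1,|x-y|^2)J(x,y)\,dy<\infty$. (H0'): $J(x,y)\ge\mathcal{K}(x-y)\ge0$ with $\mathcal{K}\notin L^1(B_\varepsilon)$ for all $\varepsilon>0$. (H1): there exist $\rho>0$ and $\ell:(0,\rho)\to(0,\infty)$, bounded above and below by positive constants on $[\varepsilon,\rho)$ for every $\varepsilon\in(0,\rho)$, with $\mathcal{K}(z)=|z|^{-N}\ell(|z|)$ for $0<|z|<\rho$ and $M(r):=\int_r^\rho\ell(s)/s\,ds\to\infty$ as $r\to0^+$. (H2): $\lim_{s\to0^+}\ell(\lambda s)/\ell(s)=1$ for all $\lambda>0$. $\mathfrak{L}u(x)=\mathrm{P.V.}\int_{\mathbb{R}^N}(u(x)-u(y))J(x,y)\,dy$; $\mathds{1}_E$ is the indicator of $E$. *)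

theory Defs
  imports "HOL-Analysis.Analysis"
begin

text \<open>The boundary of E has modulus of continuity w: the frontier of E is covered by
finitely many open sets U; for each U there is a rigid motion R (a surjective isometry
of the space), a unit vector e (playing the role of the N-th coordinate direction),
a ball D in the hyperplane orthogonal to e (a ball of R^(N-1)) and a function eta on D
with modulus w, such that after the motion E inside U coincides with the subgraph
of eta (points z + t e with z in D and t < eta z).\<close>

definition hyperball :: "'a::euclidean_space \<Rightarrow> 'a \<Rightarrow> real \<Rightarrow> 'a set" where
  "hyperball e c r = {z. z \<bullet> e = 0} \<inter> ball c r"

definition subgraph_dir :: "'a::euclidean_space \<Rightarrow> 'a set \<Rightarrow> ('a \<Rightarrow> real) \<Rightarrow> 'a set" where
  "subgraph_dir e D \<eta> =
     {y. y - (y \<bullet> e) *\<^sub>R e \<in> D \<and> y \<bullet> e < \<eta> (y - (y \<bullet> e) *\<^sub>R e)}"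

definition boundary_modulus :: "'a::euclidean_space set \<Rightarrow> (real \<Rightarrow> real) \<Rightarrow> bool" where
  "boundary_modulus E w \<longleftrightarrow>
     (\<exists>\<U>. finite \<U> \<and> (\<forall>U\<in>\<U>. open U) \<and> frontier E \<subseteq> \<Union>\<U> \<and>
       (\<forall>U\<in>\<U>. \<exists>(R::'a \<Rightarrow> 'a) (e::'a) (c::'a) (r::real) (\<eta>::'a \<Rightarrow> real).
          (\<forall>x y. dist (R x) (R y) = dist x y) \<and> surj R \<and>
          norm e = 1 \<and> c \<bullet> e = 0 \<and> 0 < r \<and>
          (\<forall>z1\<in>hyperball e c r. \<forall>z2\<in>hyperball e c r.
              \<bar>\<eta> z1 - \<eta> z2\<bar> \<le> w (norm (z1 - z2))) \<and>
          R ` (E \<inter> U) = R ` U \<inter> subgraph_dir e (hyperball e c r) \<eta>))"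

end

theory Submission
  imports Defs
begin

text \<open>
  By Fubini and translation invariance, the perimeter equals the integral of \<open>K z\<close> against
  the translation defect \<open>|{x \<in> E. x - z \<notin> E}|\<close>. The defect is at most \<open>|E|\<close>, and for small \<open>z\<close>
  it is \<open>O(|z| + w |z|)\<close>: a point \<open>x\<close> counted in it lies, together with \<open>x - z\<close>, in one chart of
  the finite cover of the boundary (Lebesgue number). In that chart either the base point of
  \<open>x - z\<close> leaves the base ball, or \<open>x\<close> lies within \<open>|z| + w |z|\<close> below the graph; in both
  cases the translates of the set of such \<open>x\<close> along a suitable vector \<open>b\<close> of length at most
  \<open>|z| + w |z|\<close> are pairwise disjoint, and a bounded set with this property has measure \<open>O(|b|)\<close>.

  In polar coordinates \<open>\<integral>\<^bsub>|z|<d\<^esub> K z (|z| + w |z|) dz\<close> becomes a multiple of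
  \<open>\<integral>\<^sub>0\<^sup>d l s + w s l s / s ds\<close>. The second part is finite by hypothesis, the first because
  (H2) gives \<open>l (s/2) \<le> 3/2 l s\<close> near \<open>0\<close>, so \<open>l\<close> grows at most like \<open>s\<^sup>-\<^sup>\<alpha>\<close> with
  \<open>\<alpha> = log 2 (3/2) < 1\<close>. Away from \<open>0\<close>, \<open>K\<close> is integrable by (H0).
\<close>

lemma emeasure_translate_vimage:
  fixes W :: "'a::euclidean_space set"
  assumes "W \<in> sets lborel"
  shows "emeasure lborel ((\<lambda>x. x + c) -` W) = emeasure lborel W"
proof -
  have "emeasure lborel W = emeasure (distr lborel borel ((+) c)) W"
    by (simp add: lborel_distr_plus)
  also have "\<dots> = emeasure lborel ((+) c -` W)"
    using assms by (subst emeasure_distr) auto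
  also have "(+) c = (\<lambda>x. x + c)" by (auto simp: add.commute)
  finally show ?thesis ..
qed

lemma emeasure_le_of_disjoint_translates:
  fixes W :: "'a::euclidean_space set" and b :: 'a
  assumes W: "W \<in> sets lborel" and W_sub: "W \<subseteq> cball 0 r"
    and disj: "\<And>x j k. j < k \<Longrightarrow> x + real j *\<^sub>R b \<in> W \<Longrightarrow> x + real k *\<^sub>R b \<in> W \<Longrightarrow> False"
  shows "of_nat n * emeasure lborel W \<le> emeasure lborel (cball (0::'a) (r + real n * norm b))"
proof -
  define T where "T j = (\<lambda>x. x + real j *\<^sub>R b) -` W" for j :: nat
  have T_sets: "T j \<in> sets lborel" for j
  proof -
    have "(\<lambda>x. x + real j *\<^sub>R b) \<in> lborel \<rightarrow>\<^sub>M lborel" by simp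
    from measurable_sets[OF this W] show ?thesis unfolding T_def by simp
  qed
  have "disjoint_family_on T {..<n}"
    unfolding disjoint_family_on_def T_def
    by (auto dest: disj) (metis disj linorder_neqE_nat)
  then have "(\<Sum>j<n. emeasure lborel (T j)) = emeasure lborel (\<Union>j<n. T j)"
    using T_sets by (intro sum_emeasure) auto
  also have "\<dots> \<le> emeasure lborel (cball (0::'a) (r + real n * norm b))"
  proof (intro emeasure_mono subsetI)
    fix x assume "x \<in> (\<Union>j<n. T j)"
    then obtain j where "j < n" and "norm (x + real j *\<^sub>R b) \<le> r"
      using W_sub unfolding T_def by auto
    moreover have "real j * norm b \<le> real n * norm b"
      using \<open>j < n\<close> by (intro mult_right_mono) auto
    ultimately show "x \<in> cball 0 (r + real n * norm b)"
      using norm_triangle_ineq4[of "x + real j *\<^sub>R b" "real j *\<^sub>R b"] by simp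
  qed auto
  finally show ?thesis
    using W unfolding T_def by (simp add: emeasure_translate_vimage)
qed

lemma emeasure_le_norm_of_disjoint_translates:
  fixes W :: "'a::euclidean_space set" and b :: 'a
  assumes W: "W \<in> sets lborel" and W_sub: "W \<subseteq> cball 0 r"
    and disj: "\<And>x j k. j < k \<Longrightarrow> x + real j *\<^sub>R b \<in> W \<Longrightarrow> x + real k *\<^sub>R b \<in> W \<Longrightarrow> False"
  shows "emeasure lborel W \<le> ennreal (2 * measure lborel (cball (0::'a) (r + 1)) * norm b)"
proof -
  have cball_eq: "emeasure lborel (cball (0::'a) (r + 1)) = ennreal (measure lborel (cball (0::'a) (r + 1)))"
    using emeasure_lborel_cball_finite by (intro emeasure_eq_ennreal_measure) (simp add: less_top)
  consider "b = 0" | "norm b > 1" | "0 < norm b" "norm b \<le> 1" by fastforce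
  then show ?thesis
  proof cases
    case 1
    then have "W = {}" using disj[of 0 1] by auto
    then show ?thesis by simp
  next
    case 2
    have "emeasure lborel W \<le> emeasure lborel (cball (0::'a) (r + 1))"
      using W_sub by (intro emeasure_mono) auto
    also have "\<dots> \<le> ennreal (2 * measure lborel (cball (0::'a) (r + 1)) * norm b)"
    proof (unfold cball_eq, intro ennreal_leI)
      have "measure lborel (cball (0::'a) (r + 1)) * 1 \<le> measure lborel (cball (0::'a) (r + 1)) * (2 * norm b)"
        using 2 by (intro mult_left_mono) auto
      then show "measure lborel (cball (0::'a) (r + 1)) \<le> 2 * measure lborel (cball (0::'a) (r + 1)) * norm b"
        by (simp add: mult_ac)
    qed
    finally show ?thesis .
  next
    case 3
    \<comment> \<open>the first \<open>n\<close> translates of \<open>W\<close> are disjoint and lie in \<open>cball 0 (r + 1)\<close>, while \<open>1 \<le> 2 n |b|\<close>\<close>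
    define n where "n = nat \<lfloor>1 / norm b\<rfloor>"
    have "1 \<le> 1 / norm b" using 3 by simp
    then have "real n = of_int \<lfloor>1 / norm b\<rfloor>" "1 \<le> real n"
      unfolding n_def by simp_all
    then have "real n \<le> 1 / norm b" "1 / norm b \<le> 2 * real n"
      using real_of_int_floor_add_one_gt[of "1 / norm b"] by linarith+
    then have n_le: "real n * norm b \<le> 1" and n_ge: "1 \<le> 2 * real n * norm b"
      using 3 by (simp_all add: field_simps)
    have "emeasure lborel W \<le> emeasure lborel W * ennreal (2 * real n * norm b)"
      using n_ge by (metis ennreal_1 ennreal_leI mult.right_neutral mult_left_mono zero_le)
    also have "\<dots> = ennreal (2 * norm b) * (of_nat n * emeasure lborel W)"
      by (simp add: ennreal_mult' ennreal_of_nat_eq_real_of_nat mult_ac)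
    also have "\<dots> \<le> ennreal (2 * norm b) * emeasure lborel (cball (0::'a) (r + real n * norm b))"
      by (rule mult_left_mono[OF emeasure_le_of_disjoint_translates[OF W W_sub]]) (auto dest: disj)
    also have "\<dots> \<le> ennreal (2 * norm b) * emeasure lborel (cball (0::'a) (r + 1))"
      using n_le by (intro mult_left_mono emeasure_mono) auto
    finally show ?thesis
      unfolding cball_eq by (simp add: ennreal_mult'[symmetric] mult_ac)
  qed
qed

definition perp :: "'a::real_inner \<Rightarrow> 'a \<Rightarrow> 'a" where
  "perp e y = y - (y \<bullet> e) *\<^sub>R e"

lemma linear_perp: "linear (perp e)"
  by (auto simp: linear_iff perp_def inner_add_left algebra_simps)

lemma
  fixes e :: "'a::real_inner"
  assumes "norm e = 1"
  shows inner_perp_unit: "perp e y \<bullet> e = 0"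
    and perp_scaleR_unit: "perp e (t *\<^sub>R e) = 0"
    and perp_perp_unit: "perp e (perp e y) = perp e y"
    and norm_perp_le: "norm (perp e y) \<le> norm y"
proof -
  have ee: "e \<bullet> e = 1" using assms by (simp add: norm_eq_1)
  show "perp e y \<bullet> e = 0" "perp e (t *\<^sub>R e) = 0"
    unfolding perp_def by (simp_all add: inner_diff_left ee)
  then show "perp e (perp e y) = perp e y"
    unfolding perp_def by simp
  have "(norm (perp e y))\<^sup>2 = (norm y)\<^sup>2 - (y \<bullet> e)\<^sup>2"
    unfolding perp_def power2_norm_eq_inner
    by (simp add: inner_diff_left inner_diff_right ee inner_commute algebra_simps power2_eq_square)
  then have "(norm (perp e y))\<^sup>2 \<le> (norm y)\<^sup>2" by simp
  then show "norm (perp e y) \<le> norm y"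
    by (rule power2_le_imp_le) simp
qed

lemma mem_subgraph_dir_iff: "y \<in> subgraph_dir e D \<eta> \<longleftrightarrow> perp e y \<in> D \<and> y \<bullet> e < \<eta> (perp e y)"
  unfolding subgraph_dir_def perp_def by simp

lemma convex_arith_step:
  assumes "convex S" "j < k" "p + real j *\<^sub>R u \<in> S" "p + real k *\<^sub>R u \<in> S"
  shows "p + (real k - 1) *\<^sub>R u \<in> S"
proof -
  define t where "t = (real k - 1 - real j) / (real k - real j)"
  have t: "0 \<le> t" "t \<le> 1" "t * (real k - real j) = real k - 1 - real j"
    using assms(2) unfolding t_def by (auto simp: field_simps)
  then have "(1 - t) *\<^sub>R (p + real j *\<^sub>R u) + t *\<^sub>R (p + real k *\<^sub>R u) \<in> S"
    using assms(1,3,4) unfolding convex_def by auto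
  moreover have "(1 - t) *\<^sub>R (p + real j *\<^sub>R u) + t *\<^sub>R (p + real k *\<^sub>R u)
      = p + ((1 - t) * real j + t * real k) *\<^sub>R u"
    by (simp add: algebra_simps)
  moreover have "(1 - t) * real j + t * real k = real k - 1"
    using t(3) by (simp add: algebra_simps)
  ultimately show ?thesis by simp
qed

locale boundary_chart =
  fixes E U :: "'a::euclidean_space set" and R :: "'a \<Rightarrow> 'a" and e c :: 'a and r :: real
    and \<eta> :: "'a \<Rightarrow> real" and w :: "real \<Rightarrow> real"
  assumes open_E: "open E" and open_U: "open U"
    and isometry: "\<And>x y. dist (R x) (R y) = dist x y"
    and unit: "norm e = 1"
    and modulus: "\<And>z1 z2. z1 \<in> hyperball e c r \<Longrightarrow> z2 \<in> hyperball e c r \<Longrightarrow>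
      \<bar>\<eta> z1 - \<eta> z2\<bar> \<le> w (norm (z1 - z2))"
    and chart: "R ` (E \<inter> U) = R ` U \<inter> subgraph_dir e (hyperball e c r) \<eta>"
    and mono_w: "mono_on {0..} w" and nonneg_w: "\<And>s. 0 \<le> s \<Longrightarrow> 0 \<le> w s"
begin

definition lin :: "'a \<Rightarrow> 'a" where "lin y = R y - R 0"

definition hor :: "'a \<Rightarrow> 'a" where "hor x = perp e (R x)"

definition height :: "'a \<Rightarrow> real" where "height x = R x \<bullet> e"

lemma orthogonal_transformation_lin: "orthogonal_transformation lin"
  unfolding orthogonal_transformation_isometry lin_def using isometry by (simp add: dist_norm)

lemma R_add: "R (x + y) = R x + lin y"
  using linear_add[OF orthogonal_transformation_linear[OF orthogonal_transformation_lin], of x y]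
  unfolding lin_def by (simp add: algebra_simps)

lemma hor_add: "hor (x + y) = hor x + perp e (lin y)"
  unfolding hor_def R_add by (simp add: linear_add[OF linear_perp])

lemma height_add: "height (x + y) = height x + lin y \<bullet> e"
  unfolding height_def R_add by (simp add: inner_add_left)

lemma norm_lin: "norm (lin y) = norm y"
  using orthogonal_transformation_lin by (simp add: orthogonal_transformation)

lemma continuous_on_hor: "continuous_on UNIV hor"
proof -
  have "continuous_on UNIV R"
    unfolding continuous_on_iff using isometry by metis
  then show ?thesis
    unfolding hor_def perp_def by (intro continuous_intros) auto
qed

lemma hor_in_hyperball_iff: "hor x \<in> hyperball e c r \<longleftrightarrow> hor x \<in> ball c r"
  unfolding hyperball_def hor_def using inner_perp_unit[OF unit] by auto

lemma mem_E_iff: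
  assumes "x \<in> U"
  shows "x \<in> E \<longleftrightarrow> hor x \<in> ball c r \<and> height x < \<eta> (hor x)"
proof -
  have "R x \<in> subgraph_dir e (hyperball e c r) \<eta> \<longleftrightarrow> hor x \<in> ball c r \<and> height x < \<eta> (hor x)"
    using hor_in_hyperball_iff unfolding mem_subgraph_dir_iff hor_def height_def by simp
  moreover have "x \<in> E \<longleftrightarrow> R x \<in> R ` (E \<inter> U)"
    using isometry assms by (auto simp: image_iff) (metis dist_eq_0_iff)
  ultimately show ?thesis
    unfolding chart using assms by blast
qed

lemma borel_measurable_hor [measurable]: "hor \<in> borel_measurable borel"
  using continuous_on_hor by (rule borel_measurable_continuous_onI)

lemma sets_E [measurable]: "E \<in> sets borel"
  using open_E by auto

lemma sets_U [measurable]: "U \<in> sets borel"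
  using open_U by auto

lemma exists_lin_preimage: "\<exists>b. lin b = v \<and> norm b = norm v"
proof -
  obtain b where "lin b = v"
    using orthogonal_transformation_surj[OF orthogonal_transformation_lin] by (metis surjD)
  then show ?thesis using norm_lin by auto
qed

lemma hor_diff: "hor (x - z) = hor x - perp e (lin z)"
  using hor_add[of x "- z"] linear_neg[OF linear_perp]
    linear_neg[OF orthogonal_transformation_linear[OF orthogonal_transformation_lin]]
  by simp

lemma emeasure_crossing_horizontal:
  assumes E_sub: "E \<subseteq> cball 0 \<rho>"
  shows "emeasure lborel {x \<in> E \<inter> U. x - z \<in> U - E \<and> hor (x - z) \<notin> ball c r}
    \<le> ennreal (2 * measure lborel (cball (0::'a) (\<rho> + 1)) * norm z)"
proof -
  define u where "u = perp e (lin z)"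
  obtain b where b: "lin b = u" "norm b = norm u"
    using exists_lin_preimage by blast
  define W where "W = {x \<in> E \<inter> U. x - z \<in> U - E \<and> hor (x - z) \<notin> ball c r}"
  have "emeasure lborel W \<le> ennreal (2 * measure lborel (cball (0::'a) (\<rho> + 1)) * norm b)"
  proof (rule emeasure_le_norm_of_disjoint_translates)
    have [measurable]: "ball c r \<in> sets borel" by auto
    show "W \<in> sets lborel" unfolding W_def by measurable
    show "W \<subseteq> cball 0 \<rho>" using E_sub unfolding W_def by auto
    fix x j k assume jk: "j < (k::nat)" and in_W: "x + real j *\<^sub>R b \<in> W" "x + real k *\<^sub>R b \<in> W"
    have hor_step: "hor (x + real i *\<^sub>R b) = hor x + real i *\<^sub>R u" for i
      using b(1) unfolding u_def
      by (simp add: hor_add linear_scale[OF linear_perp] perp_perp_unit[OF unit]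
          linear_scale[OF orthogonal_transformation_linear[OF orthogonal_transformation_lin]])
    have "hor x + real j *\<^sub>R u \<in> ball c r" "hor x + real k *\<^sub>R u \<in> ball c r"
      using in_W mem_E_iff hor_step unfolding W_def by auto
    then have "hor x + (real k - 1) *\<^sub>R u \<in> ball c r"
      by (rule convex_arith_step[OF convex_ball jk])
    moreover have "hor (x + real k *\<^sub>R b - z) = hor x + (real k - 1) *\<^sub>R u"
      unfolding hor_diff hor_step u_def by (simp add: algebra_simps)
    ultimately show False using in_W(2) unfolding W_def by auto
  qed
  also have "norm b \<le> norm z"
    using b norm_perp_le[OF unit] norm_lin unfolding u_def by metis
  then have "ennreal (2 * measure lborel (cball (0::'a) (\<rho> + 1)) * norm b)
      \<le> ennreal (2 * measure lborel (cball (0::'a) (\<rho> + 1)) * norm z)"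
    by (intro ennreal_leI mult_left_mono) auto
  finally show ?thesis unfolding W_def .
qed

lemma height_ge_of_crossing:
  assumes "y \<in> E \<inter> U" "y - z \<in> U - E" "hor (y - z) \<in> ball c r"
  shows "\<eta> (hor y) - (norm z + w (norm z)) \<le> height y"
proof -
  have below: "\<eta> (hor (y - z)) \<le> height (y - z)"
    using assms mem_E_iff[of "y - z"] by auto
  have "hor y \<in> ball c r" using assms mem_E_iff[of y] by auto
  then have "\<bar>\<eta> (hor y) - \<eta> (hor (y - z))\<bar> \<le> w (norm (hor y - hor (y - z)))"
    using modulus assms(3) hor_in_hyperball_iff by blast
  then have "\<eta> (hor y) - \<eta> (hor (y - z)) \<le> w (norm (perp e (lin z)))"
    unfolding hor_diff by simp
  also have "\<dots> \<le> w (norm z)"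
    using mono_w norm_perp_le[OF unit] norm_lin unfolding mono_on_def by (metis atLeast_iff norm_ge_zero)
  finally have "\<eta> (hor y) \<le> height (y - z) + w (norm z)" using below by linarith
  moreover have "height (y - z) \<le> height y + norm z"
    using height_add[of y "- z"] Cauchy_Schwarz_ineq2[of "lin z" e] unit norm_lin
      linear_neg[OF orthogonal_transformation_linear[OF orthogonal_transformation_lin]]
    by (auto simp: abs_le_iff)
  ultimately show ?thesis by linarith
qed

lemma emeasure_crossing_vertical:
  assumes E_sub: "E \<subseteq> cball 0 \<rho>"
  shows "emeasure lborel {x \<in> E \<inter> U. x - z \<in> U - E \<and> hor (x - z) \<in> ball c r}
    \<le> ennreal (2 * measure lborel (cball (0::'a) (\<rho> + 1)) * (norm z + w (norm z)))"
proof -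
  define h where "h = norm z + w (norm z)"
  have h_nonneg: "0 \<le> h" unfolding h_def using nonneg_w by simp
  obtain b where b: "lin b = h *\<^sub>R e" "norm b = h"
    using exists_lin_preimage[of "h *\<^sub>R e"] unit h_nonneg by auto
  define W where "W = {x \<in> E \<inter> U. x - z \<in> U - E \<and> hor (x - z) \<in> ball c r}"
  have "emeasure lborel W \<le> ennreal (2 * measure lborel (cball (0::'a) (\<rho> + 1)) * norm b)"
  proof (rule emeasure_le_norm_of_disjoint_translates)
    have [measurable]: "ball c r \<in> sets borel" by auto
    show "W \<in> sets lborel" unfolding W_def by measurable
    show "W \<subseteq> cball 0 \<rho>" using E_sub unfolding W_def by auto
    fix x j k assume jk: "j < (k::nat)" and in_W: "x + real j *\<^sub>R b \<in> W" "x + real k *\<^sub>R b \<in> W"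
    have lin_step: "lin (real i *\<^sub>R b) = (real i * h) *\<^sub>R e" for i
      using b(1) by (simp add: linear_scale[OF orthogonal_transformation_linear[OF orthogonal_transformation_lin]])
    have hor_step: "hor (x + real i *\<^sub>R b) = hor x" for i
      by (simp add: hor_add lin_step perp_scaleR_unit[OF unit])
    have height_step: "height (x + real i *\<^sub>R b) = height x + real i * h" for i
      using unit by (simp add: height_add lin_step norm_eq_1)
    have "\<eta> (hor x) - h \<le> height x + real j * h"
      using height_ge_of_crossing[of "x + real j *\<^sub>R b" z] in_W(1)
      unfolding W_def h_def hor_step height_step by auto
    moreover have "height x + real k * h < \<eta> (hor x)"
      using in_W(2) mem_E_iff[of "x + real k *\<^sub>R b"] unfolding W_def hor_step height_step by auto
    moreover have "(real j + 1) * h \<le> real k * h"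
      using jk h_nonneg by (intro mult_right_mono) auto
    ultimately show False by (simp add: algebra_simps)
  qed
  then show ?thesis unfolding W_def h_def b(2) .
qed

lemma emeasure_crossing:
  assumes "E \<subseteq> cball 0 \<rho>"
  shows "emeasure lborel {x \<in> E \<inter> U. x - z \<in> U - E}
    \<le> ennreal (4 * measure lborel (cball (0::'a) (\<rho> + 1)) * (norm z + w (norm z)))"
proof -
  define C where "C = 2 * measure lborel (cball (0::'a) (\<rho> + 1))"
  have C: "0 \<le> C" "0 \<le> C * w (norm z)" unfolding C_def using nonneg_w by auto
  have [measurable]: "ball c r \<in> sets borel" by auto
  have "emeasure lborel {x \<in> E \<inter> U. x - z \<in> U - E}
      \<le> emeasure lborel {x \<in> E \<inter> U. x - z \<in> U - E \<and> hor (x - z) \<notin> ball c r}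
        + emeasure lborel {x \<in> E \<inter> U. x - z \<in> U - E \<and> hor (x - z) \<in> ball c r}"
    by (rule order_trans[OF _ emeasure_subadditive]) (auto intro!: emeasure_mono)
  also have "\<dots> \<le> ennreal (C * norm z) + ennreal (C * (norm z + w (norm z)))"
    unfolding C_def using assms
    by (intro add_mono emeasure_crossing_horizontal emeasure_crossing_vertical)
  also have "\<dots> \<le> ennreal (2 * C * (norm z + w (norm z)))"
    using C by (simp add: ennreal_plus[symmetric] algebra_simps del: ennreal_plus)
  finally show ?thesis unfolding C_def by simp
qed

end

lemma frontier_cover_Lebesgue_number:
  fixes E :: "'a::euclidean_space set"
  assumes "bounded E" "\<forall>U\<in>\<U>. open U" "frontier E \<subseteq> \<Union>\<U>"
  obtains \<delta> where "\<delta> > 0" "\<And>x y. x \<in> E \<Longrightarrow> y \<notin> E \<Longrightarrow> dist x y < \<delta> \<Longrightarrow> \<exists>U\<in>\<U>. x \<in> U \<and> y \<in> U"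
proof -
  obtain \<delta> where "\<delta> > 0" and \<delta>: "\<And>p. p \<in> frontier E \<Longrightarrow> \<exists>U\<in>\<U>. ball p \<delta> \<subseteq> U"
    using Heine_Borel_lemma[OF compact_frontier_bounded[OF assms(1)] assms(3)] assms(2) by auto
  have crossing: "\<exists>U\<in>\<U>. x \<in> U \<and> y \<in> U" if "x \<in> E" "y \<notin> E" "dist x y < \<delta>" for x y
  proof -
    \<comment> \<open>the segment from \<open>x\<close> to \<open>y\<close> crosses the frontier at a point \<open>\<delta>\<close>-close to both ends\<close>
    have "closed_segment x y \<inter> E \<noteq> {}" "closed_segment x y - E \<noteq> {}"
      using that by auto
    then obtain p where p: "p \<in> closed_segment x y" "p \<in> frontier E"
      using connected_Int_frontier[OF connected_segment] by blast
    then obtain U where "U \<in> \<U>" "ball p \<delta> \<subseteq> U" using \<delta> by blast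
    moreover have "dist p x \<le> dist x y" "dist p y \<le> dist x y"
      using dist_in_closed_segment[OF p(1)] by auto
    then have "x \<in> ball p \<delta>" "y \<in> ball p \<delta>"
      unfolding mem_ball using that(3) by linarith+
    ultimately show ?thesis by blast
  qed
  show ?thesis using crossing by (rule that[OF \<open>\<delta> > 0\<close>])
qed

lemma boundary_modulus_imp_charts:
  fixes E :: "'a::euclidean_space set" and w :: "real \<Rightarrow> real"
  assumes "open E" "mono_on {0..} w" "\<And>s. s \<ge> 0 \<Longrightarrow> w s \<ge> 0" "boundary_modulus E w"
  shows "\<exists>\<U>. finite \<U> \<and> (\<forall>U\<in>\<U>. open U) \<and> frontier E \<subseteq> \<Union>\<U> \<and>
      (\<forall>U\<in>\<U>. \<exists>R e c r \<eta>. boundary_chart E U R e c r \<eta> w)"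
proof -
  have "boundary_chart E U R e c r \<eta> w"
    if "open U" "\<forall>x y. dist (R x) (R y) = dist x y" "norm e = 1"
      "\<forall>z1\<in>hyperball e c r. \<forall>z2\<in>hyperball e c r. \<bar>\<eta> z1 - \<eta> z2\<bar> \<le> w (norm (z1 - z2))"
      "R ` (E \<inter> U) = R ` U \<inter> subgraph_dir e (hyperball e c r) \<eta>" for U R e c r \<eta>
    using that assms(1-3) by unfold_locales auto
  then show ?thesis
    using assms(4) unfolding boundary_modulus_def by (metis (no_types, lifting))
qed

lemma emeasure_translation_defect_le_charts:
  fixes E :: "'a::euclidean_space set" and w :: "real \<Rightarrow> real"
  assumes "finite \<U>" and charts: "\<forall>U\<in>\<U>. \<exists>R e c r \<eta>. boundary_chart E U R e c r \<eta> w"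
    and E_sub: "E \<subseteq> cball 0 \<rho>"
    and crossing: "\<And>x. x \<in> E \<Longrightarrow> x - z \<notin> E \<Longrightarrow> \<exists>U\<in>\<U>. x \<in> U \<and> x - z \<in> U"
  shows "emeasure lborel {x\<in>E. x - z \<notin> E}
    \<le> ennreal (real (card \<U>) * (4 * measure lborel (cball (0::'a) (\<rho> + 1))) * (norm z + w (norm z)))"
proof -
  define B where "B = 4 * measure lborel (cball (0::'a) (\<rho> + 1)) * (norm z + w (norm z))"
  define A where "A U = {x \<in> E \<inter> U. x - z \<in> U - E}" for U
  have A_le: "A U \<in> sets lborel \<and> emeasure lborel (A U) \<le> ennreal B" if U: "U \<in> \<U>" for U
  proof -
    obtain R e c r \<eta> where "boundary_chart E U R e c r \<eta> w" using charts U by blast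
    then interpret boundary_chart E U R e c r \<eta> w .
    have "A U \<in> sets lborel" unfolding A_def by measurable
    then show ?thesis
      unfolding A_def B_def using emeasure_crossing[OF E_sub] by simp
  qed
  have "{x\<in>E. x - z \<notin> E} \<subseteq> (\<Union>U\<in>\<U>. A U)"
    using crossing unfolding A_def by blast
  then have "emeasure lborel {x\<in>E. x - z \<notin> E} \<le> emeasure lborel (\<Union>U\<in>\<U>. A U)"
    using A_le \<open>finite \<U>\<close> by (intro emeasure_mono) auto
  also have "\<dots> \<le> (\<Sum>U\<in>\<U>. emeasure lborel (A U))"
    using \<open>finite \<U>\<close> A_le by (intro emeasure_subadditive_finite) auto
  also have "\<dots> \<le> (\<Sum>U\<in>\<U>. ennreal B)"
    using A_le by (intro sum_mono) auto
  also have "\<dots> = ennreal (real (card \<U>) * (4 * measure lborel (cball (0::'a) (\<rho> + 1))) * (norm z + w (norm z)))"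
    unfolding B_def by (simp add: ennreal_mult' ennreal_of_nat_eq_real_of_nat mult.assoc)
  finally show ?thesis .
qed

lemma emeasure_translation_defect_le:
  fixes E :: "'a::euclidean_space set" and w :: "real \<Rightarrow> real"
  assumes open_E: "open E" and bounded_E: "bounded E"
    and mono_w: "mono_on {0..} w" and nonneg_w: "\<And>s. s \<ge> 0 \<Longrightarrow> w s \<ge> 0"
    and "boundary_modulus E w"
  obtains \<delta> C where "\<delta> > 0" "C \<ge> 0"
    "\<And>z. norm z < \<delta> \<Longrightarrow> emeasure lborel {x\<in>E. x - z \<notin> E} \<le> ennreal (C * (norm z + w (norm z)))"
proof -
  have "\<exists>\<U>. finite \<U> \<and> (\<forall>U\<in>\<U>. open U) \<and> frontier E \<subseteq> \<Union>\<U> \<and>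
      (\<forall>U\<in>\<U>. \<exists>R e c r \<eta>. boundary_chart E U R e c r \<eta> w)"
    by (rule boundary_modulus_imp_charts[OF open_E mono_w]) (fact nonneg_w, fact)
  then obtain \<U> where finite: "finite \<U>" and open_U: "\<forall>U\<in>\<U>. open U"
    and cover: "frontier E \<subseteq> \<Union>\<U>"
    and charts: "\<forall>U\<in>\<U>. \<exists>R e c r \<eta>. boundary_chart E U R e c r \<eta> w"
    by (elim exE conjE) (rule that)
  obtain \<rho> where "\<forall>x\<in>E. norm x \<le> \<rho>"
    using bounded_E bounded_iff by blast
  then have E_sub: "E \<subseteq> cball 0 \<rho>" by auto
  obtain \<delta> where "\<delta> > 0" and \<delta>:
    "\<And>x y. x \<in> E \<Longrightarrow> y \<notin> E \<Longrightarrow> dist x y < \<delta> \<Longrightarrow> \<exists>U\<in>\<U>. x \<in> U \<and> y \<in> U"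
    using frontier_cover_Lebesgue_number[OF bounded_E open_U cover] by blast
  define C where "C = real (card \<U>) * (4 * measure lborel (cball (0::'a) (\<rho> + 1)))"
  have bound: "emeasure lborel {x\<in>E. x - z \<notin> E} \<le> ennreal (C * (norm z + w (norm z)))"
    if "norm z < \<delta>" for z
    unfolding C_def using finite charts E_sub
  proof (rule emeasure_translation_defect_le_charts)
    show "\<exists>U\<in>\<U>. x \<in> U \<and> x - z \<in> U" if "x \<in> E" "x - z \<notin> E" for x
      using \<delta> that \<open>norm z < \<delta>\<close> by (simp add: dist_norm)
  qed
  have "C \<ge> 0" unfolding C_def by simp
  from \<open>\<delta> > 0\<close> this bound show ?thesis by (rule that)
qed

lemma nn_integral_interaction_eq:
  fixes K :: "'a::euclidean_space \<Rightarrow> real" and E :: "'a set"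
  assumes K_meas[measurable]: "K \<in> borel_measurable borel" and E_sets[measurable]: "E \<in> sets borel"
  shows "(\<integral>\<^sup>+ x\<in>E. (\<integral>\<^sup>+ y\<in>- E. ennreal (K (x - y)) \<partial>lborel) \<partial>lborel)
       = (\<integral>\<^sup>+ z. ennreal (K z) * emeasure lborel {x\<in>E. x - z \<notin> E} \<partial>lborel)"
proof -
  have reflect: "distr lborel borel (\<lambda>z. x - z) = (lborel :: 'a measure)" for x :: 'a
    using lborel_affine[of "-1" x] by (simp add: density_1)
  have inner: "(\<integral>\<^sup>+ y\<in>- E. ennreal (K (x - y)) \<partial>lborel) = (\<integral>\<^sup>+ z. ennreal (K z) * indicator (- E) (x - z) \<partial>lborel)" for x
  proof -
    have "(\<integral>\<^sup>+ y\<in>- E. ennreal (K (x - y)) \<partial>lborel)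
        = (\<integral>\<^sup>+ y. ennreal (K (x - y)) * indicator (- E) y \<partial>distr lborel borel (\<lambda>z. x - z))"
      by (simp add: reflect)
    also have "\<dots> = (\<integral>\<^sup>+ z. ennreal (K (x - (x - z))) * indicator (- E) (x - z) \<partial>lborel)"
      by (subst nn_integral_distr) auto
    finally show ?thesis by simp
  qed
  have "(\<integral>\<^sup>+ x\<in>E. (\<integral>\<^sup>+ y\<in>- E. ennreal (K (x - y)) \<partial>lborel) \<partial>lborel)
      = (\<integral>\<^sup>+ x. (\<integral>\<^sup>+ z. ennreal (K z) * indicator (- E) (x - z) * indicator E x \<partial>lborel) \<partial>lborel)"
    unfolding inner by (intro nn_integral_cong nn_integral_multc[symmetric]) auto
  also have "\<dots> = (\<integral>\<^sup>+ z. (\<integral>\<^sup>+ x. ennreal (K z) * indicator (- E) (x - z) * indicator E x \<partial>lborel) \<partial>lborel)"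
    by (rule lborel_pair.Fubini'[symmetric]) measurable
  also have "\<dots> = (\<integral>\<^sup>+ z. (\<integral>\<^sup>+ x. ennreal (K z) * indicator {x\<in>E. x - z \<notin> E} x \<partial>lborel) \<partial>lborel)"
    by (intro nn_integral_cong) (auto simp: indicator_def)
  also have "\<dots> = (\<integral>\<^sup>+ z. ennreal (K z) * emeasure lborel {x\<in>E. x - z \<notin> E} \<partial>lborel)"
    by (intro nn_integral_cong nn_integral_cmult_indicator) measurable
  finally show ?thesis .
qed

lemma emeasure_ball_inter_norm_greater:
  assumes "0 \<le> a" "a < d"
  shows "emeasure lborel (ball (0::'a::euclidean_space) d \<inter> {z. a < norm z})
     = ennreal (unit_ball_vol DIM('a) * (d ^ DIM('a) - a ^ DIM('a)))"
proof -
  have "ball (0::'a) d \<inter> {z. a < norm z} = ball 0 d - cball 0 a" by auto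
  moreover have "emeasure lborel (ball (0::'a) d - cball 0 a)
      = emeasure lborel (ball (0::'a) d) - emeasure lborel (cball (0::'a) a)"
    using assms by (intro emeasure_Diff) (auto simp: emeasure_cball)
  moreover have "ennreal (unit_ball_vol DIM('a) * d ^ DIM('a)) - ennreal (unit_ball_vol DIM('a) * a ^ DIM('a))
      = ennreal (unit_ball_vol DIM('a) * (d ^ DIM('a) - a ^ DIM('a)))"
    using assms by (subst ennreal_minus) (auto simp: algebra_simps power_mono)
  ultimately show ?thesis using assms by (simp add: emeasure_cball emeasure_ball)
qed

lemma nn_integral_sphere_area:
  assumes "0 \<le> a" "a < d"
  shows "(\<integral>\<^sup>+s. indicator {a<..<d} s * ennreal (real DIM('a::euclidean_space) * unit_ball_vol DIM('a) * s ^ (DIM('a) - 1)) \<partial>lborel)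
     = ennreal (unit_ball_vol DIM('a) * (d ^ DIM('a) - a ^ DIM('a)))"
proof -
  let ?N = "DIM('a)" let ?\<omega> = "unit_ball_vol DIM('a)"
  have "(\<integral>\<^sup>+s. indicator {a<..<d} s * ennreal (real ?N * ?\<omega> * s ^ (?N - 1)) \<partial>lborel)
      = (\<integral>\<^sup>+s. ennreal (real ?N * ?\<omega> * s ^ (?N - 1)) * indicator {a..d} s \<partial>lborel)"
  proof (intro nn_integral_cong_AE)
    show "AE s in lborel. indicator {a<..<d} s * ennreal (real ?N * ?\<omega> * s ^ (?N - 1)) =
        ennreal (real ?N * ?\<omega> * s ^ (?N - 1)) * indicator {a..d} s"
      using AE_lborel_singleton[of a] AE_lborel_singleton[of d]
      by eventually_elim (auto simp: indicator_def)
  qed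
  also have "\<dots> = ennreal (?\<omega> * d ^ ?N - ?\<omega> * a ^ ?N)"
  proof (rule nn_integral_FTC_Icc[where F="\<lambda>s. ?\<omega> * s ^ ?N"])
    fix x assume "x \<in> {a..d}"
    then show "0 \<le> real ?N * ?\<omega> * x ^ (?N - 1)" using assms by simp
    show "((\<lambda>s. ?\<omega> * s ^ ?N) has_real_derivative real ?N * ?\<omega> * x ^ (?N - 1)) (at x)"
      by (auto intro!: derivative_eq_intros)
  qed (use assms in auto)
  finally show ?thesis by (simp add: algebra_simps)
qed

lemma distr_norm_ball:
  assumes "d > 0"
  shows "distr (density lborel (indicator (ball (0::'a::euclidean_space) d))) borel norm
    = density lborel (\<lambda>s. indicator {0<..<d} s * ennreal (real DIM('a) * unit_ball_vol DIM('a) * s ^ (DIM('a) - 1)))"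
proof -
  let ?N = "DIM('a)" let ?\<omega> = "unit_ball_vol DIM('a)"
  define g where "g s = indicator {0<..<d} s * ennreal (real ?N * ?\<omega> * s ^ (?N - 1))" for s :: real
  have g[measurable]: "g \<in> borel_measurable borel" unfolding g_def by simp
  define M where "M = distr (density lborel (indicator (ball (0::'a) d))) borel norm"
  have M_tail: "emeasure M {x<..} = emeasure lborel (ball (0::'a) d \<inter> {z. x < norm z})" for x
  proof -
    have [measurable]: "{z::'a. x < norm z} \<in> sets borel" by measurable
    have "emeasure M {x<..} = emeasure (density lborel (indicator (ball (0::'a) d))) {z. x < norm z}"
      unfolding M_def by (subst emeasure_distr) (auto simp: vimage_def)
    then show ?thesis by (subst (asm) emeasure_restricted) auto
  qed
  show ?thesis
    unfolding M_def[symmetric] g_def[symmetric]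
  proof (rule measure_eqI_lessThan)
    show "sets M = sets borel" "sets (density lborel g) = sets borel" unfolding M_def by auto
    show "emeasure M {x<..} < \<infinity>" for x
    proof -
      have "emeasure lborel (ball (0::'a) d \<inter> {z. x < norm z}) \<le> emeasure lborel (ball (0::'a) d)"
        by (intro emeasure_mono) auto
      then show ?thesis
        unfolding M_tail using emeasure_lborel_ball_finite[of "0::'a" d] by order
    qed
    fix x :: real
    have g_tail: "emeasure (density lborel g) {x<..}
        = (\<integral>\<^sup>+s. indicator {max x 0<..<d} s * ennreal (real ?N * ?\<omega> * s ^ (?N - 1)) \<partial>lborel)"
      by (subst emeasure_density) (auto intro!: nn_integral_cong simp: g_def indicator_def)
    consider "x < 0" | "0 \<le> x" "x < d" | "d \<le> x" by linarith
    then show "emeasure M {x<..} = emeasure (density lborel g) {x<..}"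
    proof cases
      case 1
      then have "ball (0::'a) d \<inter> {z. x < norm z} = ball (0::'a) d"
        using norm_ge_zero less_le_trans by fastforce
      then show ?thesis unfolding M_tail g_tail
        using 1 nn_integral_sphere_area[of 0 d, where 'a='a] assms
        by (simp add: max_def emeasure_ball)
    next
      case 2
      then show ?thesis unfolding M_tail g_tail
        using emeasure_ball_inter_norm_greater[of x d, where 'a='a] nn_integral_sphere_area[of x d, where 'a='a]
        by simp
    next
      case 3
      then have "ball (0::'a) d \<inter> {z. x < norm z} = {}" "{max x 0<..<d} = {}" by auto
      then show ?thesis unfolding M_tail g_tail by simp
    qed
  qed
qed

lemma nn_integral_radial_ball:
  fixes f :: "real \<Rightarrow> ennreal"
  assumes f[measurable]: "f \<in> borel_measurable borel" and "d > 0"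
  shows "(\<integral>\<^sup>+z. indicator (ball (0::'a::euclidean_space) d) z * f (norm z) \<partial>lborel)
    = (\<integral>\<^sup>+s. indicator {0<..<d} s * ennreal (real DIM('a) * unit_ball_vol DIM('a) * s ^ (DIM('a) - 1)) * f s \<partial>lborel)"
proof -
  have "(\<integral>\<^sup>+z. indicator (ball (0::'a) d) z * f (norm z) \<partial>lborel)
      = (\<integral>\<^sup>+z. f (norm z) \<partial>density lborel (indicator (ball (0::'a) d)))"
    by (subst nn_integral_density) (auto intro!: borel_measurable_indicator)
  also have "\<dots> = (\<integral>\<^sup>+s. f s \<partial>distr (density lborel (indicator (ball (0::'a) d))) borel norm)"
    by (subst nn_integral_distr) auto
  also have "\<dots> = (\<integral>\<^sup>+s. indicator {0<..<d} s * ennreal (real DIM('a) * unit_ball_vol DIM('a) * s ^ (DIM('a) - 1)) * f s \<partial>lborel)"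
    unfolding distr_norm_ball[OF \<open>d > 0\<close>] by (subst nn_integral_density) auto
  finally show ?thesis .
qed

lemma nn_integral_dyadic_bound_finite:
  fixes f :: "real \<Rightarrow> real"
  assumes a: "0 < a" and C: "0 \<le> C" and q: "0 \<le> q" "q < 2"
    and bound: "\<And>k s. a / 2^(k+1) < s \<Longrightarrow> s \<le> a / 2^k \<Longrightarrow> f s \<le> C * q^k"
  shows "(\<integral>\<^sup>+ s. indicator {0<..a} s * ennreal (f s) \<partial>lborel) < \<infinity>"
proof -
  define I where "I k = {a / 2^(k+1) <.. a / 2^k}" for k :: nat
  define F where "F k s = indicator (I k) s * ennreal (C * q^k)" for k :: nat and s :: real
  have shell: "\<exists>k. s \<in> I k" if s: "0 < s" "s \<le> a" for s
  proof -
    obtain n where "a / s < 2^n" using real_arch_pow[of 2 "a / s"] by auto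
    then have "\<exists>n. a < s * 2^n" using s by (auto simp: field_simps)
    then obtain m where m: "a < s * 2^m" "\<And>j. j < m \<Longrightarrow> \<not> a < s * 2^j"
      using exists_least_iff[of "\<lambda>n. a < s * 2^n"] by blast
    then obtain k where "m = Suc k" using s m(1) by (cases m) auto
    then have "\<not> a < s * 2^k" "a < s * 2^(k+1)" using m by auto
    then have "a / 2^(k+1) < s" "s \<le> a / 2^k"
      by (auto simp: field_simps)
    then show ?thesis unfolding I_def by auto
  qed
  have F_meas: "F k \<in> borel_measurable borel" for k unfolding F_def I_def by simp
  have pointwise: "indicator {0<..a} s * ennreal (f s) \<le> (\<Sum>k. F k s)" for s
  proof (cases "s \<in> {0<..a}")
    case True
    then obtain k where k: "s \<in> I k" using shell by auto
    then have "indicator {0<..a} s * ennreal (f s) \<le> F k s"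
      using True bound unfolding I_def F_def by (auto intro!: ennreal_leI)
    also have "\<dots> \<le> (\<Sum>j<Suc k. F j s)" by (intro member_le_sum) auto
    also have "\<dots> \<le> (\<Sum>j. F j s)" by (intro sum_le_suminf) auto
    finally show ?thesis .
  qed simp
  have F_integral: "(\<integral>\<^sup>+ s. F k s \<partial>lborel) = ennreal (C * a / 2 * (q / 2)^k)" for k
  proof -
    have "(\<integral>\<^sup>+ s. F k s \<partial>lborel) = ennreal (C * q^k) * emeasure lborel (I k)"
      unfolding F_def by (subst nn_integral_cmult_indicator[symmetric]) (auto simp: I_def mult.commute)
    also have "emeasure lborel (I k) = ennreal (a / 2^k - a / 2^(k+1))"
      unfolding I_def using a by (intro emeasure_lborel_Ioc) (auto simp: field_simps)
    also have "ennreal (C * q^k) * ennreal (a / 2^k - a / 2^(k+1)) = ennreal (C * q^k * (a / 2^k - a / 2^(k+1)))"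
      using C q a by (intro ennreal_mult'[symmetric]) auto
    also have "C * q^k * (a / 2^k - a / 2^(k+1)) = C * a / 2 * (q / 2)^k"
      by (simp add: field_simps power_divide)
    finally show ?thesis .
  qed
  have "(\<integral>\<^sup>+ s. indicator {0<..a} s * ennreal (f s) \<partial>lborel) \<le> (\<integral>\<^sup>+ s. (\<Sum>k. F k s) \<partial>lborel)"
    by (intro nn_integral_mono pointwise)
  also have "\<dots> = (\<Sum>k. \<integral>\<^sup>+ s. F k s \<partial>lborel)"
    using F_meas by (intro nn_integral_suminf) simp
  also have "\<dots> = (\<Sum>k. ennreal (C * a / 2 * (q / 2)^k))"
    unfolding F_integral ..
  also have "(\<Sum>k. ennreal (C * a / 2 * (q / 2)^k)) < \<infinity>"
  proof -
    have "summable (\<lambda>k. C * a / 2 * (q / 2)^k)" using q by (intro summable_mult summable_geometric) auto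
    then show ?thesis using C q a by (simp add: ennreal_suminf_neq_top less_top)
  qed
  finally show ?thesis .
qed

lemma slowly_varying_integrable_at_0:
  fixes l :: "real \<Rightarrow> real"
  assumes \<rho>: "0 < \<rho>"
    and l_pos: "\<And>s. 0 < s \<Longrightarrow> s < \<rho> \<Longrightarrow> l s > 0"
    and l_bdd: "\<And>\<epsilon>. 0 < \<epsilon> \<Longrightarrow> \<epsilon> < \<rho> \<Longrightarrow> \<exists>c C. 0 < c \<and> 0 < C \<and> (\<forall>s\<in>{\<epsilon>..<\<rho>}. c \<le> l s \<and> l s \<le> C)"
    and l_half: "((\<lambda>s. l ((1/2) * s) / l s) \<longlongrightarrow> 1) (at_right 0)"
  obtains a where "0 < a" "a < \<rho>" "(\<integral>\<^sup>+ s. indicator {0<..a} s * ennreal (l s) \<partial>lborel) < \<infinity>"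
proof -
  have "eventually (\<lambda>s. l ((1/2) * s) / l s < 3/2) (at_right 0)"
    using l_half by (rule order_tendstoD) simp
  then obtain b where "b > 0" and doubling: "\<And>s. 0 < s \<Longrightarrow> s < b \<Longrightarrow> l ((1/2) * s) / l s < 3/2"
    unfolding eventually_at_right_field by auto
  define a where "a = min (b/2) (\<rho>/2)"
  have a: "0 < a" "a < \<rho>" "a < b" using \<open>b > 0\<close> \<rho> unfolding a_def by auto
  obtain C where C: "0 < C" "\<And>s. a/2 \<le> s \<Longrightarrow> s < \<rho> \<Longrightarrow> l s \<le> C"
    using l_bdd[of "a/2"] a by force
  \<comment> \<open>each halving of \<open>s\<close> costs at most a factor \<open>3/2 < 2\<close>\<close>
  have "l s \<le> C * (3/2)^k" if "a / 2^(k+1) < s" "s \<le> a / 2^k" for k s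
    using that
  proof (induction k arbitrary: s)
    case 0
    then show ?case using C a by auto
  next
    case (Suc k)
    then have "a / 2^(k+1) < 2 * s" "2 * s \<le> a / 2^k" by (auto simp: field_simps)
    then have IH: "l (2 * s) \<le> C * (3/2)^k" by (rule Suc.IH)
    have "0 < a / 2^(Suc k + 1)" using a(1) by simp
    then have "0 < s" using Suc.prems(1) by linarith
    moreover have "a / 2^k \<le> a / 1"
      using a(1) by (intro divide_left_mono) auto
    then have "2 * s \<le> a" using \<open>2 * s \<le> a / 2^k\<close> by simp
    ultimately have "l s < 3/2 * l (2 * s)"
      using doubling[of "2 * s"] l_pos[of "2 * s"] a by (simp add: divide_less_eq)
    with IH show ?case by simp
  qed
  then have "(\<integral>\<^sup>+ s. indicator {0<..a} s * ennreal (l s) \<partial>lborel) < \<infinity>"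
    using a C by (intro nn_integral_dyadic_bound_finite[of a C "3/2"]) auto
  then show ?thesis using a that by blast
qed

lemma borel_measurable_comp_norm:
  fixes w :: "real \<Rightarrow> real"
  assumes "continuous_on {0..} w"
  shows "(\<lambda>z::'a::real_normed_vector. w (norm z)) \<in> borel_measurable borel"
proof -
  have "continuous_on UNIV (\<lambda>z::'a. w (norm z))"
    by (rule continuous_on_compose2[OF assms]) (auto intro: continuous_intros)
  then show ?thesis by (rule borel_measurable_continuous_onI)
qed

lemma radial_kernel_measurable_profile:
  fixes K :: "'a::euclidean_space \<Rightarrow> real" and l :: "real \<Rightarrow> real"
  assumes K_meas[measurable]: "K \<in> borel_measurable borel"
    and K_l: "\<And>z. 0 < norm z \<Longrightarrow> norm z < \<rho> \<Longrightarrow> K z = l (norm z) / norm z ^ DIM('a)"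
  obtains k where "k \<in> borel_measurable borel" "\<And>z. norm z < \<rho> \<Longrightarrow> K z = k (norm z)"
    "\<And>s. 0 < s \<Longrightarrow> s < \<rho> \<Longrightarrow> k s * s ^ DIM('a) = l s"
proof -
  obtain b :: 'a where "b \<in> Basis" using nonempty_Basis by blast
  then have b: "norm b = 1" by simp
  show ?thesis
  proof (rule that[of "\<lambda>s. K (s *\<^sub>R b)"])
    show "K z = K (norm z *\<^sub>R b)" if "norm z < \<rho>" for z
      using that K_l[of z] K_l[of "norm z *\<^sub>R b"] b by (cases "z = 0") auto
    show "K (s *\<^sub>R b) * s ^ DIM('a) = l s" if "0 < s" "s < \<rho>" for s
      using that K_l[of "s *\<^sub>R b"] b by simp
  qed measurable
qed

lemma nn_integral_kernel_modulus_ball_finite: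
  fixes K :: "'a::euclidean_space \<Rightarrow> real" and l w :: "real \<Rightarrow> real"
  assumes K_meas: "K \<in> borel_measurable borel"
    and K_l: "\<And>z. 0 < norm z \<Longrightarrow> norm z < \<rho> \<Longrightarrow> K z = l (norm z) / norm z ^ DIM('a)"
    and l_pos: "\<And>s. 0 < s \<Longrightarrow> s < \<rho> \<Longrightarrow> l s > 0"
    and w_cont: "continuous_on {0..} w" and w_nonneg: "\<And>s. s \<ge> 0 \<Longrightarrow> w s \<ge> 0"
    and d: "0 < d" "d \<le> a" "a < \<rho>"
    and l_int: "(\<integral>\<^sup>+ s. indicator {0<..a} s * ennreal (l s) \<partial>lborel) < \<infinity>"
    and wl_int: "(\<integral>\<^sup>+ s\<in>{0<..<\<rho>}. ennreal (w s * l s / s) \<partial>lborel) < \<infinity>"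
  shows "(\<integral>\<^sup>+ z. indicator (ball 0 d) z * ennreal (K z * (norm z + w (norm z))) \<partial>lborel) < \<infinity>"
proof -
  let ?N = "DIM('a)" let ?\<omega> = "unit_ball_vol DIM('a)"
  \<comment> \<open>\<open>l\<close> itself need not be measurable, so we integrate the profile \<open>k s * s ^ N\<close> of \<open>K\<close> instead\<close>
  obtain k where [measurable]: "k \<in> borel_measurable borel" and K_k: "\<And>z. norm z < \<rho> \<Longrightarrow> K z = k (norm z)"
    and k_l: "\<And>s. 0 < s \<Longrightarrow> s < \<rho> \<Longrightarrow> k s * s ^ ?N = l s"
    using radial_kernel_measurable_profile[OF K_meas K_l] by blast
  have [measurable]: "(\<lambda>s. w \<bar>s\<bar>) \<in> borel_measurable borel"
    using borel_measurable_comp_norm[OF w_cont, where 'a=real] by simp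
  define g where "g s = ennreal (k s * (\<bar>s\<bar> + w \<bar>s\<bar>))" for s :: real
  have [measurable]: "g \<in> borel_measurable borel" unfolding g_def by measurable
  define h where "h s = indicator {0<..d} s * ennreal (k s * s ^ ?N)
    + indicator {0<..<\<rho>} s * ennreal (w \<bar>s\<bar> * (k s * s ^ ?N) / s)" for s :: real
  have "(\<integral>\<^sup>+ z. indicator (ball 0 d) z * ennreal (K z * (norm z + w (norm z))) \<partial>lborel)
      = (\<integral>\<^sup>+ z. indicator (ball (0::'a) d) z * g (norm z) \<partial>lborel)"
    using d K_k by (intro nn_integral_cong) (auto simp: g_def indicator_def)
  also have "\<dots> = (\<integral>\<^sup>+ s. indicator {0<..<d} s * ennreal (real ?N * ?\<omega> * s ^ (?N - 1)) * g s \<partial>lborel)"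
    using d by (intro nn_integral_radial_ball) auto
  also have "\<dots> \<le> (\<integral>\<^sup>+ s. ennreal (real ?N * ?\<omega>) * h s \<partial>lborel)"
  proof (intro nn_integral_mono)
    fix s :: real
    show "indicator {0<..<d} s * ennreal (real ?N * ?\<omega> * s ^ (?N - 1)) * g s \<le> ennreal (real ?N * ?\<omega>) * h s"
    proof (cases "0 < s \<and> s < d")
      case True
      then have s: "0 < s" "s < \<rho>" using d by auto
      have "0 \<le> k s * s ^ ?N" using k_l[OF s] l_pos[OF s] by simp
      moreover have "0 \<le> w s" using w_nonneg s by simp
      moreover have "s ^ (?N - 1) * (k s * (s + w s)) = k s * s ^ ?N + w s * (k s * s ^ ?N) / s"
        using s by (simp add: field_simps power_eq_if)
      moreover have "ennreal (real ?N * ?\<omega> * s ^ (?N - 1)) * ennreal (k s * (s + w s))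
          = ennreal (real ?N * ?\<omega>) * ennreal (s ^ (?N - 1) * (k s * (s + w s)))"
        using s by (simp add: ennreal_mult'[symmetric] mult.assoc)
      ultimately show ?thesis
        using True s by (simp add: g_def h_def ennreal_plus[symmetric] del: ennreal_plus)
    qed auto
  qed
  also have "\<dots> = ennreal (real ?N * ?\<omega>) * (\<integral>\<^sup>+ s. h s \<partial>lborel)"
    unfolding h_def by (intro nn_integral_cmult) measurable
  also have "\<dots> \<le> ennreal (real ?N * ?\<omega>) * ((\<integral>\<^sup>+ s. indicator {0<..a} s * ennreal (l s) \<partial>lborel)
      + (\<integral>\<^sup>+ s\<in>{0<..<\<rho>}. ennreal (w s * l s / s) \<partial>lborel))"
  proof (rule mult_left_mono)
    have "(\<integral>\<^sup>+ s. indicator {0<..d} s * ennreal (k s * s ^ ?N) \<partial>lborel)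
        \<le> (\<integral>\<^sup>+ s. indicator {0<..a} s * ennreal (l s) \<partial>lborel)"
      using d by (intro nn_integral_mono) (auto simp: k_l indicator_def)
    moreover have "(\<integral>\<^sup>+ s. indicator {0<..<\<rho>} s * ennreal (w \<bar>s\<bar> * (k s * s ^ ?N) / s) \<partial>lborel)
        = (\<integral>\<^sup>+ s\<in>{0<..<\<rho>}. ennreal (w s * l s / s) \<partial>lborel)"
      by (intro nn_integral_cong) (auto simp: k_l indicator_def)
    ultimately show "(\<integral>\<^sup>+ s. h s \<partial>lborel) \<le> (\<integral>\<^sup>+ s. indicator {0<..a} s * ennreal (l s) \<partial>lborel)
        + (\<integral>\<^sup>+ s\<in>{0<..<\<rho>}. ennreal (w s * l s / s) \<partial>lborel)"
      unfolding h_def by (subst nn_integral_add) (auto intro: add_mono)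
  qed simp
  also have "\<dots> < \<infinity>"
    using l_int wl_int by (simp add: ennreal_mult_less_top)
  finally show ?thesis .
qed

lemma nn_integral_kernel_finite:
  fixes K g :: "'a::euclidean_space \<Rightarrow> real" and \<phi> :: "'a \<Rightarrow> ennreal"
  assumes K_meas[measurable]: "K \<in> borel_measurable borel" and K_nonneg: "\<And>z. 0 \<le> K z"
    and K_moment: "(\<integral>\<^sup>+ z. ennreal (min 1 ((norm z)\<^sup>2) * K z) \<partial>lborel) < \<infinity>"
    and g_meas[measurable]: "g \<in> borel_measurable borel" and d: "0 < d"
    and near: "(\<integral>\<^sup>+ z. indicator (ball 0 d) z * ennreal (K z * g z) \<partial>lborel) < \<infinity>"
    and C: "0 \<le> C" and \<phi>_near: "\<And>z. norm z < d \<Longrightarrow> \<phi> z \<le> ennreal (C * g z)"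
    and \<phi>_bdd: "\<And>z. \<phi> z \<le> B" and B: "B < \<infinity>"
  shows "(\<integral>\<^sup>+ z. ennreal (K z) * \<phi> z \<partial>lborel) < \<infinity>"
proof -
  define m where "m = min 1 (d\<^sup>2)"
  have m: "0 < m" using d unfolding m_def by auto
  have pointwise: "ennreal (K z) * \<phi> z
      \<le> ennreal C * (indicator (ball 0 d) z * ennreal (K z * g z))
        + (B * ennreal (1/m)) * ennreal (min 1 ((norm z)\<^sup>2) * K z)" for z
  proof (cases "norm z < d")
    case True
    have "ennreal (K z) * \<phi> z \<le> ennreal (K z) * ennreal (C * g z)"
      using \<phi>_near[OF True] by (rule mult_left_mono) simp
    also have "\<dots> = ennreal C * (indicator (ball 0 d) z * ennreal (K z * g z))"
      using True K_nonneg[of z] C by (simp add: ennreal_mult'[symmetric] mult_ac)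
    finally show ?thesis by (rule order_trans) simp
  next
    case False
    then have "d\<^sup>2 \<le> (norm z)\<^sup>2"
      using d by (intro power_mono) auto
    then have "m \<le> min 1 ((norm z)\<^sup>2)"
      unfolding m_def by auto
    then have "m * K z \<le> min 1 ((norm z)\<^sup>2) * K z"
      using K_nonneg[of z] by (rule mult_right_mono)
    then have "K z \<le> (1/m) * (min 1 ((norm z)\<^sup>2) * K z)"
      using m by (simp add: field_simps)
    then have "ennreal (K z) \<le> ennreal (1/m) * ennreal (min 1 ((norm z)\<^sup>2) * K z)"
      using m by (simp add: ennreal_mult'[symmetric] ennreal_leI)
    then have "ennreal (K z) * \<phi> z \<le> ennreal (1/m) * ennreal (min 1 ((norm z)\<^sup>2) * K z) * B"
      using \<phi>_bdd[of z] by (intro mult_mono) auto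
    also have "\<dots> = (B * ennreal (1/m)) * ennreal (min 1 ((norm z)\<^sup>2) * K z)"
      by (simp add: mult_ac)
    finally show ?thesis by (rule order_trans) simp
  qed
  have "(\<integral>\<^sup>+ z. ennreal (K z) * \<phi> z \<partial>lborel)
      \<le> (\<integral>\<^sup>+ z. ennreal C * (indicator (ball 0 d) z * ennreal (K z * g z))
          + (B * ennreal (1/m)) * ennreal (min 1 ((norm z)\<^sup>2) * K z) \<partial>lborel)"
    by (intro nn_integral_mono pointwise)
  also have "\<dots> = ennreal C * (\<integral>\<^sup>+ z. indicator (ball 0 d) z * ennreal (K z * g z) \<partial>lborel)
      + (B * ennreal (1/m)) * (\<integral>\<^sup>+ z. ennreal (min 1 ((norm z)\<^sup>2) * K z) \<partial>lborel)"
  proof -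
    have [measurable]: "ball (0::'a) d \<in> sets borel" by simp
    show ?thesis
      by (subst nn_integral_add) (simp_all add: nn_integral_cmult)
  qed
  also have "\<dots> < \<infinity>"
    using near K_moment B by (simp add: ennreal_mult_less_top less_top)
  finally show ?thesis .
qed

theorem mainTheorem10:
  fixes K :: "'a::euclidean_space \<Rightarrow> real"
    and l :: "real \<Rightarrow> real"
    and \<rho> :: real
    and w :: "real \<Rightarrow> real"
    and E :: "'a set"
  assumes K_meas: "K \<in> borel_measurable lborel"
    and K_nonneg: "\<And>z. K z \<ge> 0"
    and K_even: "\<And>z. K (- z) = K z"
    and H0: "(\<integral>\<^sup>+ z. ennreal (min 1 ((norm z)\<^sup>2) * K z) \<partial>lborel) < \<infinity>"
    and H0': "\<And>\<epsilon>. \<epsilon> > 0 \<Longrightarrow> \<not> set_integrable lborel (ball 0 \<epsilon>) K"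
    and rho_pos: "\<rho> > 0"
    and ell_pos: "\<And>s. 0 < s \<Longrightarrow> s < \<rho> \<Longrightarrow> l s > 0"
    and ell_bdd: "\<And>\<epsilon>. 0 < \<epsilon> \<Longrightarrow> \<epsilon> < \<rho> \<Longrightarrow>
        \<exists>c C. 0 < c \<and> 0 < C \<and> (\<forall>s\<in>{\<epsilon>..<\<rho>}. c \<le> l s \<and> l s \<le> C)"
    and K_ell: "\<And>z. 0 < norm z \<Longrightarrow> norm z < \<rho> \<Longrightarrow>
        K z = l (norm z) / norm z ^ DIM('a)"
    and H1_M: "((\<lambda>r. \<integral>\<^sup>+ s\<in>{r<..<\<rho>}. ennreal (l s / s) \<partial>lborel) \<longlongrightarrow> \<infinity>) (at_right 0)"
    and H2: "\<And>lam. lam > 0 \<Longrightarrow> ((\<lambda>s. l (lam * s) / l s) \<longlongrightarrow> 1) (at_right 0)"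
    and E_open: "open E" and E_bdd: "bounded E"
    and w_cont: "continuous_on {0..} w"
    and w_mono: "mono_on {0..} w"
    and w_nonneg: "\<And>s. s \<ge> 0 \<Longrightarrow> w s \<ge> 0"
    and w_0: "w 0 = 0"
    and E_mod: "boundary_modulus E w"
    and int_fin: "(\<integral>\<^sup>+ s\<in>{0<..<\<rho>}. ennreal (w s * l s / s) \<partial>lborel) < \<infinity>"
  shows "(\<integral>\<^sup>+ x\<in>E. (\<integral>\<^sup>+ y\<in>- E. ennreal (K (x - y)) \<partial>lborel) \<partial>lborel) < \<infinity>"
proof -
  have K_borel[measurable]: "K \<in> borel_measurable borel" using K_meas by simp
  have [measurable]: "(\<lambda>z::'a. w (norm z)) \<in> borel_measurable borel"
    using w_cont by (rule borel_measurable_comp_norm)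
  obtain \<delta> C where "\<delta> > 0" "C \<ge> 0" and defect:
    "\<And>z. norm z < \<delta> \<Longrightarrow> emeasure lborel {x\<in>E. x - z \<notin> E} \<le> ennreal (C * (norm z + w (norm z)))"
    using emeasure_translation_defect_le[of E w] E_open E_bdd w_mono w_nonneg E_mod by blast
  obtain a where a: "0 < a" "a < \<rho>" and l_int: "(\<integral>\<^sup>+ s. indicator {0<..a} s * ennreal (l s) \<partial>lborel) < \<infinity>"
    using slowly_varying_integrable_at_0[of \<rho> l] rho_pos ell_pos ell_bdd H2[of "1/2"] by auto
  define d where "d = min \<delta> a"
  have d: "0 < d" "d \<le> a" "d \<le> \<delta>" using \<open>\<delta> > 0\<close> a unfolding d_def by auto
  have near: "(\<integral>\<^sup>+ z. indicator (ball 0 d) z * ennreal (K z * (norm z + w (norm z))) \<partial>lborel) < \<infinity>"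
    using nn_integral_kernel_modulus_ball_finite[OF K_borel K_ell ell_pos w_cont w_nonneg d(1,2) a(2) l_int int_fin]
    by auto
  have "emeasure lborel {x\<in>E. x - z \<notin> E} \<le> emeasure lborel E" for z
    using E_open by (intro emeasure_mono) auto
  moreover have "emeasure lborel E < \<infinity>"
    using emeasure_bounded_finite[OF E_bdd] by (simp add: less_top)
  ultimately have "(\<integral>\<^sup>+ z. ennreal (K z) * emeasure lborel {x\<in>E. x - z \<notin> E} \<partial>lborel) < \<infinity>"
    using K_nonneg H0 d near \<open>C \<ge> 0\<close> defect
    by (intro nn_integral_kernel_finite[where B = "emeasure lborel E"]) auto
  then show ?thesis
    using E_open by (simp add: nn_integral_interaction_eq)
qed

end
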